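(* Let $n\ge 1$, let $1\le k\le n$, and let $\tau\in\{0,1\}^n$ be a word with exactly $k$ letters equal to $1$. Let $\lambda(\tau)=(\lambda_1,\ldots,\lambda_k)$ be the partition associated to $\tau$, and set $\lambda_{k+1}=0$. Define $P(\tau)=\sum_T \mathrm{wt}(T)$, where the sum is over all Catalan tableaux $T$ of type $\tau$. Then \[ P(\tau)=\alpha^{k+\lambda_1}\beta^n\det A^{\alpha,\beta}_{\lambda(\tau)}, \] where $A^{\alpha,\beta}_{\lambda(\tau)}=(A_{ij})_{1\le i,j\le k}$ is the $k\times k$ matrix with entries \[ A_{ij}=\left(\binom{\lambda_{j+1}}{j-i+1}+\frac{1}{\beta}\binom{\lambda_{j+1}}{j-i}\right)+\sum_{p=1}^{\lambda_j-\lambda_{j+1}}\left(\frac{1}{\alpha}\right)^p\left(\binom{\lambda_{j+1}+p-1}{j-i}+\frac{1}{\beta}\binom{\lambda_{j+1}+p-1}{j-i-1}\right). \]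
   Context: $\alpha,\beta$ are indeterminates (or nonzero reals). Binomial coefficients satisfy $\binom{m}{r}=0$ if $r<0$ or $r>m$, and $\binom{m}{0}=1$; an empty sum is $0$. Partition of a word: for $\tau\in\{0,1\}^n$ with $k$ ones, $\lambda(\tau)=(\lambda_1,\ldots,\lambda_k)$ where $\lambda_i$ is the total number of $0$'s occurring (anywhere) after the $i$-th $1$ of $\tau$; thus $n-k\ge\lambda_1\ge\cdots\ge\lambda_k\ge 0$. Catalan tableau: a Catalan (alternative) tableau of size $(n,k)$ is a Young diagram $Y$ contained in a $k\times(n-k)$ rectangle (k rows, $n-k$ columns), justified to the northwest (row $i$, counted from the top, consists of the leftmost $\lambda_i$ boxes of that row of the rectangle, with $\lambda_1\ge\cdots\ge\lambda_k\ge0$), together with a filling of the boxes of $Y$ with symbols $\alpha$ and $\beta$ (each box containing at most one symbol) such that: (i) every box of $Y$ in the same column and above a box containing $\alpha$ is empty; (ii) every box of $Y$ in the same row and to the left of a box containing $\beta$ is empty; (iii) every box of $Y$ that is neither above an $\alpha$ (in its column) nor to the left of a $\beta$ (in its row) contains an $\alpha$ or a $\beta$. The type of the tableau is the word in $\{0,1\}^n$ obtained by walking along the southeast border of $Y$ from the northeast corner to the southwest corner of the rectangle, writing $1$ for each south step and $0$ for each west step; equivalently, a Catalan tableau of type $\tau$ is one whose Young diagram has row lengths $\lambda(\tau)$ inside the $k\times(n-k)$ rectangle. Weight: an $\alpha$-free column is a column of the $k\times(n-k)$ rectangle containing no $\alpha$; a $\beta$-free row is a row of the rectangle containing no $\beta$.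 The weight of a Catalan tableau $T$ of size $(n,k)$ is $\mathrm{wt}(T)=(\alpha\beta)^n(1/\alpha)^{f_{\mathrm{col}}(T)}(1/\beta)^{f_{\mathrm{row}}(T)}$, where $f_{\mathrm{col}}(T)$ is the number of $\alpha$-free columns and $f_{\mathrm{row}}(T)$ the number of $\beta$-free rows. *)

theory Defs
  imports "Jordan_Normal_Form.Determinant"
begin

(* A word tau in {0,1}^n is a bool list; True = letter 1, False = letter 0. *)

definition num_ones :: "bool list \<Rightarrow> nat" where
  "num_ones \<tau> = length (filter id \<tau>)"

definition ones_pos :: "bool list \<Rightarrow> nat list" where
  "ones_pos \<tau> = filter (\<lambda>j. \<tau> ! j) [0..<length \<tau>]"

(* lam tau i = lambda_i for 1 <= i <= k (number of 0's after the i-th 1);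
   lam tau i = 0 otherwise (in particular lambda_{k+1} = 0). *)
definition lam :: "bool list \<Rightarrow> nat \<Rightarrow> nat" where
  "lam \<tau> i = (if 1 \<le> i \<and> i \<le> num_ones \<tau>
      then length (filter Not (drop (ones_pos \<tau> ! (i - 1) + 1) \<tau>)) else 0)"

datatype sym = SA | SB

(* box (i,j) (row i, column j, 1-based) of the Young diagram of lambda(tau) *)
definition is_box :: "bool list \<Rightarrow> nat \<Rightarrow> nat \<Rightarrow> bool" where
  "is_box \<tau> i j \<longleftrightarrow> 1 \<le> i \<and> i \<le> num_ones \<tau> \<and> 1 \<le> j \<and> j \<le> lam \<tau> i"

definition catalan_tableau :: "bool list \<Rightarrow> (nat \<Rightarrow> nat \<Rightarrow> sym option) \<Rightarrow> bool" where
  "catalan_tableau \<tau> f \<longleftrightarrow>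
     (\<forall>i j. \<not> is_box \<tau> i j \<longrightarrow> f i j = None) \<and>
     (\<forall>i j i'. is_box \<tau> i j \<and> f i j = Some SA \<and> i' < i \<and> is_box \<tau> i' j \<longrightarrow> f i' j = None) \<and>
     (\<forall>i j j'. is_box \<tau> i j \<and> f i j = Some SB \<and> j' < j \<and> is_box \<tau> i j' \<longrightarrow> f i j' = None) \<and>
     (\<forall>i j. is_box \<tau> i j \<and>
        \<not> (\<exists>i'. i < i' \<and> is_box \<tau> i' j \<and> f i' j = Some SA) \<and>
        \<not> (\<exists>j'. j < j' \<and> is_box \<tau> i j' \<and> f i j' = Some SB) \<longrightarrow> f i j \<noteq> None)"

definition fcol :: "bool list \<Rightarrow> (nat \<Rightarrow> nat \<Rightarrow> sym option) \<Rightarrow> nat" where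
  "fcol \<tau> f = card {j \<in> {1..length \<tau> - num_ones \<tau>}. \<forall>i \<in> {1..num_ones \<tau>}. f i j \<noteq> Some SA}"

definition frow :: "bool list \<Rightarrow> (nat \<Rightarrow> nat \<Rightarrow> sym option) \<Rightarrow> nat" where
  "frow \<tau> f = card {i \<in> {1..num_ones \<tau>}. \<forall>j \<in> {1..length \<tau> - num_ones \<tau>}. f i j \<noteq> Some SB}"

definition wt :: "'a::field \<Rightarrow> 'a \<Rightarrow> bool list \<Rightarrow> (nat \<Rightarrow> nat \<Rightarrow> sym option) \<Rightarrow> 'a" where
  "wt \<alpha> \<beta> \<tau> f = (\<alpha> * \<beta>) ^ length \<tau> * (1 / \<alpha>) ^ fcol \<tau> f * (1 / \<beta>) ^ frow \<tau> f"

definition Ptau :: "'a::field \<Rightarrow> 'a \<Rightarrow> bool list \<Rightarrow> 'a" where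
  "Ptau \<alpha> \<beta> \<tau> = (\<Sum>f \<in> {f. catalan_tableau \<tau> f}. wt \<alpha> \<beta> \<tau> f)"

(* binomial coefficient with integer lower index: 0 if r < 0 or r > m *)
definition binz :: "nat \<Rightarrow> int \<Rightarrow> 'a::comm_ring_1" where
  "binz m r = (if r < 0 then 0 else of_nat (m choose nat r))"

(* entry A_{ij}, 1-based indices *)
definition Aent :: "'a::field \<Rightarrow> 'a \<Rightarrow> bool list \<Rightarrow> nat \<Rightarrow> nat \<Rightarrow> 'a" where
  "Aent \<alpha> \<beta> \<tau> i j =
     (binz (lam \<tau> (j+1)) (int j - int i + 1) + (1/\<beta>) * binz (lam \<tau> (j+1)) (int j - int i))
     + (\<Sum>p = 1..lam \<tau> j - lam \<tau> (j+1).
          (1/\<alpha>) ^ p * (binz (lam \<tau> (j+1) + p - 1) (int j - int i)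
                       + (1/\<beta>) * binz (lam \<tau> (j+1) + p - 1) (int j - int i - 1)))"

definition Amat :: "'a::field \<Rightarrow> 'a \<Rightarrow> bool list \<Rightarrow> 'a mat" where
  "Amat \<alpha> \<beta> \<tau> = mat (num_ones \<tau>) (num_ones \<tau>) (\<lambda>(i, j). Aent \<alpha> \<beta> \<tau> (i+1) (j+1))"

end

theory Submission
  imports Defs "HOL-Computational_Algebra.Formal_Power_Series"
begin

text \<open>Both sides satisfy the same recurrence in the last \<open>1\<close> of \<open>\<tau> = u 1 0^m\<close>. The last row
  of a Catalan tableau of type \<open>\<tau>\<close> has length \<open>m\<close>; it is empty up to a \<open>\<beta>\<close> in some column
  \<open>s\<close> (no \<open>\<beta>\<close> at all when \<open>s = 0\<close>) followed by \<open>\<alpha>\<close>s in columns \<open>s+1..m\<close>. These \<open>\<alpha>\<close>s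
  force every box above them to be empty, so deleting the last row and those columns is a
  bijection onto the tableaux of type \<open>u 0^s\<close>, and counting free rows and columns gives
  \<open>P(u 1 0^m) = \<Sum>s=0..m. (\<alpha>\<beta>)^(m-s+1) \<beta>^(-[s = 0]) P(u 0^s)\<close>.

  Column \<open>j\<close> of \<open>A\<close> lists coefficients of the power series
  \<open>(1+x)^\<lambda>\<^sub>j\<^sub>+\<^sub>1 (1 + x/\<beta>) (1 + x \<Sum>p=1..\<lambda>\<^sub>j-\<lambda>\<^sub>j\<^sub>+\<^sub>1. \<alpha>^-p (1+x)^(p-1))\<close>, so \<open>A\<close> is a
  Hessenberg matrix and its determinant is a single coefficient of a product of series.
  Cancelling the common factors \<open>(1+x)^n\<close> of the columns and a polynomial identity for the
  last column give the matching recurrence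
  \<open>det A(u 1 0^m) = \<Sum>s=1..m. det A(u 0^s) + \<beta>^-1 det A(u)\<close>.\<close>

no_notation vec_index (infixl "$" 100)
notation fps_nth (infixl "$" 75)

section \<open>Hessenberg matrices of coefficients\<close>

definition coeff_mat :: "nat \<Rightarrow> (nat \<Rightarrow> 'a::comm_ring_1 fps) \<Rightarrow> 'a mat" where
  "coeff_mat k c = mat k k (\<lambda>(i,j). if i \<le> Suc j then c (Suc j) $ (Suc j - i) else 0)"

text \<open>When all \<open>c j\<close> have constant coefficient \<open>1\<close>, coefficient \<open>j\<close> of \<open>hess_series c k\<close>
  is \<open>(-1)^j\<close> times the \<open>j\<close>-th leading principal minor of \<open>coeff_mat k c\<close>; this is what
  makes the expansion along the last row in \<open>det_coeff_mat_Suc\<close> work.\<close>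

fun hess_series :: "(nat \<Rightarrow> 'a::comm_ring_1 fps) \<Rightarrow> nat \<Rightarrow> 'a fps" where
  "hess_series c 0 = 1"
| "hess_series c (Suc j) =
     hess_series c j - fps_const ((c (Suc j) * hess_series c j) $ Suc j) * fps_X ^ Suc j"

lemma hess_series_nth_above: "j < i \<Longrightarrow> hess_series c j $ i = 0"
  by (induction j) auto

lemma hess_series_cong:
  "(\<And>j. 1 \<le> j \<Longrightarrow> j \<le> k \<Longrightarrow> c j = c' j) \<Longrightarrow> hess_series c k = hess_series c' k"
  by (induction k) auto

lemma coeff_mat_carrier [simp]: "coeff_mat k c \<in> carrier_mat k k"
  unfolding coeff_mat_def by auto

lemma coeff_mat_cong:
  "(\<And>j. 1 \<le> j \<Longrightarrow> j \<le> n \<Longrightarrow> c j = c' j) \<Longrightarrow> coeff_mat n c = coeff_mat n c'"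
  unfolding coeff_mat_def by (rule eq_matI) auto

lemma fps_mult_nth_Suc_shift:
  "((f::'a::comm_ring_1 fps) * g) $ Suc n = (fps_shift 1 f * g) $ n + f $ 0 * g $ Suc n"
proof -
  have "f = fps_const (f$0) + fps_X * fps_shift 1 f"
    by (rule fps_ext) auto
  then have "f * g = fps_const (f$0) * g + fps_X * (fps_shift 1 f * g)"
    by (metis (no_types, lifting) distrib_right mult.assoc)
  then show ?thesis by simp
qed

lemma fps_const_X_power_mult_nth:
  "(fps_const e * fps_X ^ n * (f::'a::comm_ring_1 fps)) $ i = (if i < n then 0 else e * f $ (i - n))"
proof -
  have "fps_const e * fps_X ^ n * f = fps_const e * (fps_X ^ n * f)"
    by (simp add: mult.assoc)
  then show ?thesis by (simp only: fps_mult_left_const_nth fps_X_power_mult_nth) simp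
qed

lemma det_coeff_mat_Suc:
  assumes "\<And>j. 1 \<le> j \<Longrightarrow> j \<le> k \<Longrightarrow> c j $ 0 = 1"
  shows "det (coeff_mat (Suc k) c) = (-1)^k * (c (Suc k) * hess_series c k) $ Suc k"
  using assms
proof (induction k arbitrary: c)
  case 0
  have "det (coeff_mat 1 c) = coeff_mat 1 c $$ (0,0)" by (rule det_single) auto
  then show ?case by (simp add: coeff_mat_def)
next
  case (Suc k)
  let ?M = "coeff_mat (Suc (Suc k)) c"
  let ?T = "hess_series c k"
  let ?e = "(c (Suc k) * ?T) $ Suc k"
  \<comment> \<open>deleting the second-to-last column shifts the last series by one coefficient\<close>
  define c' where "c' = c(Suc k := fps_shift 1 (c (Suc (Suc k))))"
  have "det ?M = (\<Sum>j<Suc (Suc k). ?M $$ (Suc k, j) * cofactor ?M (Suc k) j)"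
    by (rule laplace_expansion_row) auto
  also have "\<dots> = (\<Sum>j\<in>{k, Suc k}. ?M $$ (Suc k, j) * cofactor ?M (Suc k) j)"
    by (rule sum.mono_neutral_right) (auto simp: coeff_mat_def)
  also have "\<dots> = c (Suc (Suc k)) $ 1 * det (coeff_mat (Suc k) c) - det (coeff_mat (Suc k) c')"
  proof -
    have "mat_delete ?M (Suc k) (Suc k) = coeff_mat (Suc k) c"
      by (rule eq_matI) (auto simp: mat_delete_def coeff_mat_def)
    moreover have "mat_delete ?M (Suc k) k = coeff_mat (Suc k) c'"
    proof (rule eq_matI)
      fix i j assume "i < dim_row (coeff_mat (Suc k) c')" "j < dim_col (coeff_mat (Suc k) c')"
      then show "mat_delete ?M (Suc k) k $$ (i, j) = coeff_mat (Suc k) c' $$ (i, j)"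
        by (cases "j = k") (auto simp: mat_delete_def coeff_mat_def c'_def Suc_diff_le)
    qed (auto simp: mat_delete_def coeff_mat_def)
    ultimately show ?thesis
      using Suc.prems[of "Suc k"] by (simp add: coeff_mat_def cofactor_def)
  qed
  also have "det (coeff_mat (Suc k) c) = (-1)^k * ?e"
    by (rule Suc.IH) (auto simp: Suc.prems)
  also have "det (coeff_mat (Suc k) c') = (-1)^k * (fps_shift 1 (c (Suc (Suc k))) * ?T) $ Suc k"
  proof -
    have "hess_series c' k = ?T" by (rule hess_series_cong) (auto simp: c'_def)
    moreover have "det (coeff_mat (Suc k) c') = (-1)^k * (c' (Suc k) * hess_series c' k) $ Suc k"
      by (rule Suc.IH) (auto simp: c'_def Suc.prems)
    ultimately show ?thesis by (simp add: c'_def)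
  qed
  also have "(fps_shift 1 (c (Suc (Suc k))) * ?T) $ Suc k
      = (c (Suc (Suc k)) * hess_series c (Suc k)) $ Suc (Suc k) + ?e * c (Suc (Suc k)) $ 1"
  proof -
    have "(c (Suc (Suc k)) * ?T) $ Suc (Suc k) = (fps_shift 1 (c (Suc (Suc k))) * ?T) $ Suc k"
      using fps_mult_nth_Suc_shift[of "c (Suc (Suc k))" ?T "Suc k"] hess_series_nth_above[of k "Suc (Suc k)" c]
      by simp
    moreover have "(c (Suc (Suc k)) * (fps_const ?e * fps_X ^ Suc k)) $ Suc (Suc k) = ?e * c (Suc (Suc k)) $ 1"
      using fps_const_X_power_mult_nth[of ?e "Suc k" "c (Suc (Suc k))"] by (simp add: mult.commute)
    ultimately show ?thesis by (simp add: right_diff_distrib del: power_Suc)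
  qed
  finally show ?case by (simp add: algebra_simps)
qed

lemma fps_mult_nth_eq_if_low_coeffs_eq:
  assumes "\<And>i. i < j \<Longrightarrow> A $ i = B $ i"
  shows "((c::'a::comm_ring_1 fps) * A) $ j = (c * B) $ j + c $ 0 * (A $ j - B $ j)"
proof -
  have "(c * A) $ j - (c * B) $ j = (\<Sum>i=0..j. c $ i * (A $ (j - i) - B $ (j - i)))"
    by (simp add: fps_mult_nth sum_subtractf[symmetric] right_diff_distrib)
  also have "\<dots> = (\<Sum>i\<in>{0}. c $ i * (A $ (j - i) - B $ (j - i)))"
    by (rule sum.mono_neutral_right) (auto simp: assms)
  finally show ?thesis by (simp add: algebra_simps)
qed

text \<open>Multiplying all columns by a series \<open>R\<close> with \<open>R(0) = 1\<close> is a sequence of row operations;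
  on the level of \<open>hess_series\<close> it is undone by multiplication with \<open>R\<close>.\<close>

lemma hess_series_mult:
  assumes R0: "R $ 0 = 1" and c0: "\<And>j. 1 \<le> j \<Longrightarrow> j \<le> k \<Longrightarrow> c j $ 0 = 1"
    and c': "\<And>j. 1 \<le> j \<Longrightarrow> j \<le> k \<Longrightarrow> c' j = R * c j"
  shows "i \<le> k \<Longrightarrow> (R * hess_series c' k) $ i = hess_series c k $ i"
  using c0 c'
proof (induction k arbitrary: i)
  case 0
  then show ?case using R0 by simp
next
  case (Suc k)
  let ?T' = "hess_series c' k" and ?T = "hess_series c k"
  have IH: "\<And>i. i \<le> k \<Longrightarrow> (R * ?T') $ i = ?T $ i"
    using Suc.IH Suc.prems by auto
  define e' where "e' = (c' (Suc k) * ?T') $ Suc k"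
  define e where "e = (c (Suc k) * ?T) $ Suc k"
  have "e' = (c (Suc k) * (R * ?T')) $ Suc k"
    unfolding e'_def using Suc.prems(3)[of "Suc k"] by (simp add: algebra_simps)
  also have "\<dots> = e + (R * ?T') $ Suc k"
    unfolding e_def
    using fps_mult_nth_eq_if_low_coeffs_eq[of "Suc k" "R * ?T'" ?T "c (Suc k)"] IH
      Suc.prems(2)[of "Suc k"] hess_series_nth_above[of k "Suc k" c]
    by simp
  finally have ee: "e' = e + (R * ?T') $ Suc k" .
  have "(R * hess_series c' (Suc k)) $ i = (R * ?T') $ i - (if i < Suc k then 0 else e' * R $ (i - Suc k))"
    using fps_const_X_power_mult_nth[of e' "Suc k" R]
    by (simp add: e'_def right_diff_distrib mult.commute del: power_Suc)
  moreover have "hess_series c (Suc k) $ i = ?T $ i - (if i = Suc k then e else 0)"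
    by (simp add: e_def del: power_Suc)
  ultimately show ?case
    using IH Suc.prems(1) R0 ee hess_series_nth_above[of k "Suc k" c] by (auto simp: le_Suc_eq)
qed

lemma det_coeff_mat_mult:
  fixes c c' :: "nat \<Rightarrow> 'a::field fps"
  assumes R0: "R $ 0 = 1" and c0: "\<And>j. 1 \<le> j \<Longrightarrow> j \<le> k \<Longrightarrow> c j $ 0 = 1"
    and c': "\<And>j. 1 \<le> j \<Longrightarrow> j \<le> k \<Longrightarrow> c' j = R * c j"
  shows "det (coeff_mat (Suc k) c') = (-1)^k *
     ((inverse R * (c' (Suc k) - fps_const (c' (Suc k) $ 0))) * hess_series c k) $ Suc k"
proof -
  define a where "a = c' (Suc k) $ 0"
  define h where "h = inverse R * (c' (Suc k) - fps_const a)"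
  have "c' (Suc k) = R * h + fps_const a"
    unfolding h_def using R0 by (simp add: mult.assoc[symmetric] inverse_mult_eq_1')
  then have "(c' (Suc k) * hess_series c' k) $ Suc k = (h * (R * hess_series c' k)) $ Suc k"
    using hess_series_nth_above[of k "Suc k" c'] by (simp add: algebra_simps)
  also have "\<dots> = (h * hess_series c k) $ Suc k"
    using fps_mult_nth_eq_if_low_coeffs_eq[of "Suc k" "R * hess_series c' k" "hess_series c k" h]
      hess_series_mult[OF R0 c0 c'] by (simp add: h_def a_def)
  finally show ?thesis
    using det_coeff_mat_Suc[of k c'] c0 c' R0 by (simp add: h_def a_def)
qed

section \<open>The matrix \<open>A\<close> as a coefficient matrix\<close>

lemma fps_one_plus_X_power_nth: "((1 + fps_X) ^ m) $ r = (of_nat (m choose r) :: 'a::comm_ring_1)"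
proof (induction m arbitrary: r)
  case 0 then show ?case by (cases r) auto
next
  case (Suc m)
  have "(1 + fps_X) ^ Suc m = (1 + fps_X) * (1 + fps_X :: 'a fps) ^ m" by simp
  then show ?case
    by (simp only: fps_mult_fps_X_plus_1_nth) (cases r; simp add: Suc.IH)
qed

lemma fps_one_plus_X_power_inverse:
  "((1 + fps_X :: 'a::field fps) ^ n) * inverse ((1 + fps_X) ^ n) = 1"
  by (rule inverse_mult_eq_1') (simp add: fps_one_plus_X_power_nth)

lemma fps_one_plus_X_power_inverse_mult:
  assumes "p + q = n"
  shows "inverse ((1 + fps_X :: 'a::field fps) ^ n) * (1 + fps_X) ^ p = inverse ((1 + fps_X) ^ q)"
proof -
  have "inverse ((1 + fps_X :: 'a fps) ^ n) = inverse ((1 + fps_X) ^ p) * inverse ((1 + fps_X) ^ q)"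
    unfolding assms[symmetric] power_add fps_inverse_mult ..
  then show ?thesis using fps_one_plus_X_power_inverse[of p] by (simp add: algebra_simps)
qed

lemma binomial_fps_nth:
  fixes b :: "'a::comm_ring_1"
  shows "((1 + fps_const b * fps_X) * (1 + fps_X) ^ m) $ r = binz m (int r) + b * binz m (int r - 1)"
proof -
  have "(1 + fps_const b * fps_X) * (1 + fps_X) ^ m = (1 + fps_X) ^ m + fps_const b * (fps_X * (1 + fps_X) ^ m)"
    by (simp add: algebra_simps)
  then show ?thesis
    by (cases r) (auto simp: binz_def fps_one_plus_X_power_nth nat_add_distrib)
qed

lemma X_binomial_fps_nth:
  fixes b :: "'a::comm_ring_1"
  shows "(fps_X * ((1 + fps_const b * fps_X) * (1 + fps_X) ^ m)) $ r
     = binz m (int r - 1) + b * binz m (int r - 1 - 1)"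
  by (cases r) (auto simp: binomial_fps_nth binz_def)

definition alpha_fps :: "'a::comm_ring_1 \<Rightarrow> nat \<Rightarrow> 'a fps" where
  "alpha_fps a d = 1 + fps_X * (\<Sum>p=1..d. fps_const (a^p) * (1 + fps_X)^(p - 1))"

definition alpha_beta_fps :: "'a::field \<Rightarrow> 'a \<Rightarrow> nat \<Rightarrow> 'a fps" where
  "alpha_beta_fps a b n = (1 + fps_const b * fps_X) * alpha_fps a n"

text \<open>Entry \<open>(i, j)\<close> of \<open>A\<close> (indices from \<open>1\<close>) is the coefficient of \<open>x^(j - i + 1)\<close> in this series.\<close>

definition Acol_fps :: "'a::field \<Rightarrow> 'a \<Rightarrow> bool list \<Rightarrow> nat \<Rightarrow> 'a fps" where
  "Acol_fps \<alpha> \<beta> \<tau> j = (1 + fps_X)^(lam \<tau> (Suc j)) * alpha_beta_fps (1/\<alpha>) (1/\<beta>) (lam \<tau> j - lam \<tau> (Suc j))"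

lemma one_plus_X_power_mult_alpha_beta_fps:
  fixes a b :: "'a::field"
  defines "Z \<equiv> \<lambda>m. (1 + fps_const b * fps_X) * (1 + fps_X) ^ m"
  shows "(1 + fps_X) ^ m * alpha_beta_fps a b d
     = Z m + (\<Sum>p=1..d. fps_const (a^p) * (fps_X * Z (m + p - 1)))"
proof -
  have "(1 + fps_X) ^ m * alpha_beta_fps a b d
      = Z m + (\<Sum>p=1..d. Z m * (fps_X * (fps_const (a^p) * (1 + fps_X) ^ (p - 1))))"
    unfolding alpha_beta_fps_def alpha_fps_def Z_def by (simp add: algebra_simps sum_distrib_left)
  also have "(\<Sum>p=1..d. Z m * (fps_X * (fps_const (a^p) * (1 + fps_X) ^ (p - 1))))
      = (\<Sum>p=1..d. fps_const (a^p) * (fps_X * Z (m + p - 1)))"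
  proof (rule sum.cong)
    fix p assume "p \<in> {1..d}"
    then have "m + p - 1 = m + (p - 1)" by simp
    then show "Z m * (fps_X * (fps_const (a^p) * (1 + fps_X) ^ (p - 1)))
        = fps_const (a^p) * (fps_X * Z (m + p - 1))"
      by (simp add: Z_def power_add algebra_simps)
  qed simp
  finally show ?thesis .
qed

lemma Acol_fps_nth:
  "Acol_fps \<alpha> \<beta> \<tau> j $ r =
     (binz (lam \<tau> (Suc j)) (int r) + (1/\<beta>) * binz (lam \<tau> (Suc j)) (int r - 1))
     + (\<Sum>p = 1..lam \<tau> j - lam \<tau> (Suc j).
          (1/\<alpha>) ^ p * (binz (lam \<tau> (Suc j) + p - 1) (int r - 1)
                       + (1/\<beta>) * binz (lam \<tau> (Suc j) + p - 1) (int r - 1 - 1)))"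
  unfolding Acol_fps_def one_plus_X_power_mult_alpha_beta_fps
  by (simp only: fps_add_nth fps_sum_nth fps_mult_left_const_nth binomial_fps_nth X_binomial_fps_nth)

lemma Acol_fps_nth_0: "Acol_fps \<alpha> \<beta> \<tau> j $ 0 = 1"
  by (simp add: Acol_fps_def alpha_beta_fps_def alpha_fps_def fps_one_plus_X_power_nth)

lemma Amat_eq_coeff_mat: "Amat \<alpha> \<beta> \<tau> = coeff_mat (num_ones \<tau>) (Acol_fps \<alpha> \<beta> \<tau>)"
proof (rule eq_matI)
  fix i j assume ij: "i < dim_row (coeff_mat (num_ones \<tau>) (Acol_fps \<alpha> \<beta> \<tau>))"
     "j < dim_col (coeff_mat (num_ones \<tau>) (Acol_fps \<alpha> \<beta> \<tau>))"
  show "Amat \<alpha> \<beta> \<tau> $$ (i, j) = coeff_mat (num_ones \<tau>) (Acol_fps \<alpha> \<beta> \<tau>) $$ (i, j)"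
  proof (cases "i \<le> Suc j")
    case True
    then have "int (Suc j) - int (Suc i) + 1 = int (Suc j - i)"
      and "int (Suc j) - int (Suc i) = int (Suc j - i) - 1" by auto
    with ij True show ?thesis unfolding Amat_def coeff_mat_def Aent_def Acol_fps_nth
      by (simp only:) (simp del: of_nat_Suc)
  next
    case False
    then show ?thesis using ij unfolding Amat_def coeff_mat_def Aent_def
      by (simp add: binz_def)
  qed
qed (auto simp: Amat_def coeff_mat_def)

lemma num_ones_Nil [simp]: "num_ones [] = 0"
  by (simp add: num_ones_def)

lemma num_ones_Cons [simp]: "num_ones (x # v) = (if x then Suc (num_ones v) else num_ones v)"
  by (simp add: num_ones_def)

lemma num_ones_append [simp]: "num_ones (u @ v) = num_ones u + num_ones v"
  by (simp add: num_ones_def)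

lemma num_ones_replicate_False [simp]: "num_ones (replicate m False) = 0"
  by (induction m) auto

lemma num_ones_le_length: "num_ones u \<le> length u"
  by (simp add: num_ones_def)

lemma ones_pos_Nil [simp]: "ones_pos [] = []"
  by (simp add: ones_pos_def)

lemma ones_pos_snoc: "ones_pos (u @ [x]) = ones_pos u @ (if x then [length u] else [])"
proof -
  have "filter (\<lambda>j. (u @ [x]) ! j) [0..<length u] = filter (\<lambda>j. u ! j) [0..<length u]"
    by (rule filter_cong) (auto simp: nth_append)
  then show ?thesis by (simp add: ones_pos_def)
qed

lemma length_ones_pos: "length (ones_pos u) = num_ones u"
  by (induction u rule: rev_induct) (auto simp: ones_pos_snoc)

lemma ones_pos_less_length: "p \<in> set (ones_pos u) \<Longrightarrow> p < length u"
  by (simp add: ones_pos_def)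

lemma lam_eq_0: "\<not> (1 \<le> i \<and> i \<le> num_ones u) \<Longrightarrow> lam u i = 0"
  by (auto simp: lam_def)

lemma lam_le_length: "lam u i \<le> length u"
  unfolding lam_def by (auto intro: order_trans[OF length_filter_le])

lemma lam_snoc:
  assumes "1 \<le> i" "i \<le> num_ones u"
  shows "lam (u @ [x]) i = lam u i + (if x then 0 else 1)"
proof -
  let ?p = "ones_pos u ! (i - 1)"
  have ip: "i - 1 < length (ones_pos u)" using assms by (simp add: length_ones_pos)
  then have "ones_pos (u @ [x]) ! (i - 1) = ?p" by (simp add: ones_pos_snoc nth_append)
  moreover have "?p < length u" using ones_pos_less_length[OF nth_mem[OF ip]] .
  ultimately show ?thesis using assms by (simp add: lam_def)
qed

lemma lam_snoc_True: "lam (u @ [True]) i = lam u i"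
proof -
  consider "1 \<le> i \<and> i \<le> num_ones u" | "i = Suc (num_ones u)" | "\<not> (1 \<le> i \<and> i \<le> Suc (num_ones u))"
    by linarith
  then show ?thesis
  proof cases
    case 1
    then show ?thesis using lam_snoc[of i u True] by simp
  next
    case 2
    have "ones_pos (u @ [True]) ! num_ones u = length u"
      by (simp add: ones_pos_snoc nth_append length_ones_pos)
    then show ?thesis using 2 by (simp add: lam_def lam_eq_0)
  next
    case 3
    then have "lam u i = 0" and "lam (u @ [True]) i = 0"
      by (auto intro!: lam_eq_0)
    then show ?thesis by simp
  qed
qed

lemma lam_append_replicate_False:
  "lam (u @ replicate s False) i = (if 1 \<le> i \<and> i \<le> num_ones u then lam u i + s else 0)"
proof (induction s)
  case 0 then show ?case by (auto simp: lam_eq_0)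
next
  case (Suc s)
  have "u @ replicate (Suc s) False = (u @ replicate s False) @ [False]"
    by (simp add: replicate_append_same)
  then show ?case using Suc lam_snoc[of i "u @ replicate s False" False] by (auto simp: lam_eq_0)
qed

lemma lam_append_one_replicate_False:
  "lam (u @ True # replicate m False) i =
     (if 1 \<le> i \<and> i \<le> num_ones u then lam u i + m else if i = Suc (num_ones u) then m else 0)"
proof -
  have split: "u @ True # replicate m False = (u @ [True]) @ replicate m False" by simp
  show ?thesis
    unfolding split lam_append_replicate_False lam_snoc_True by (auto simp: lam_eq_0)
qed

lemma word_decomp_last_one:
  assumes "1 \<le> num_ones \<tau>"
  obtains u m where "\<tau> = u @ True # replicate m False"
  using assms
proof (induction \<tau> arbitrary: thesis rule: rev_induct)
  case (snoc x xs)
  show ?case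
  proof (cases x)
    case True then show ?thesis using snoc.prems(1)[of xs 0] by simp
  next
    case False
    then obtain u m where "xs = u @ True # replicate m False"
      using snoc.IH snoc.prems(2) by auto
    then show ?thesis using False snoc.prems(1)[of u "Suc m"] by (simp add: replicate_append_same)
  qed
qed simp

section \<open>The determinant recurrence\<close>

lemma alpha_fps_Suc: "alpha_fps a (Suc n) = alpha_fps a n + fps_X * fps_const (a ^ Suc n) * (1 + fps_X) ^ n"
  unfolding alpha_fps_def by (simp add: algebra_simps)

lemma alpha_fps_add:
  "alpha_fps a (N + M) = alpha_fps a N + fps_const (a ^ N) * (1 + fps_X) ^ N * (alpha_fps a M - 1)"
proof (induction M)
  case 0 then show ?case by (simp add: alpha_fps_def)
next
  case (Suc M)
  have "alpha_fps a (N + Suc M) = alpha_fps a (N + M) + fps_X * fps_const (a ^ Suc (N + M)) * (1 + fps_X) ^ (N + M)"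
    using alpha_fps_Suc[of a "N + M"] by simp
  also have "\<dots> = alpha_fps a N + fps_const (a ^ N) * (1 + fps_X) ^ N * (alpha_fps a (Suc M) - 1)"
    unfolding Suc alpha_fps_Suc[of a M]
    by (simp add: algebra_simps power_add fps_const_mult[symmetric] del: fps_const_mult)
  finally show ?case .
qed

lemma alpha_beta_fps_add:
  "alpha_beta_fps a b (N + M) = alpha_beta_fps a b N
     + fps_const (a ^ N) * (1 + fps_X) ^ N * (alpha_beta_fps a b M - (1 + fps_const b * fps_X))"
  unfolding alpha_beta_fps_def alpha_fps_add by (simp add: algebra_simps)

lemma alpha_beta_fps_Suc:
  "alpha_beta_fps a b (Suc n)
     = alpha_beta_fps a b n + fps_const (a ^ Suc n) * (1 + fps_const b * fps_X) * fps_X * (1 + fps_X) ^ n"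
  unfolding alpha_beta_fps_def alpha_fps_Suc by (simp only: distrib_left mult_ac)

lemma alpha_beta_fps_nth_0: "alpha_beta_fps a b n $ 0 = 1"
  unfolding alpha_beta_fps_def alpha_fps_def by simp

lemma alpha_beta_fps_nth_1_Suc:
  "alpha_beta_fps a b (Suc n) $ 1 = alpha_beta_fps a b n $ 1 + a ^ Suc n"
proof -
  have "fps_const (a ^ Suc n) * (1 + fps_const b * fps_X) * fps_X * (1 + fps_X) ^ n
      = fps_const (a ^ Suc n) * (fps_X * ((1 + fps_const b * fps_X) * (1 + fps_X) ^ n))"
    by (simp only: mult_ac)
  then have "(fps_const (a ^ Suc n) * (1 + fps_const b * fps_X) * fps_X * (1 + fps_X) ^ n) $ 1 = a ^ Suc n"
    by (simp only: fps_mult_left_const_nth X_binomial_fps_nth) (simp add: binz_def)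
  then show ?thesis unfolding alpha_beta_fps_Suc by simp
qed

lemma alpha_beta_fps_identity:
  fixes a b :: "'a::field"
  defines "Y \<equiv> 1 + fps_X :: 'a fps"
  shows "fps_X * (fps_const b * Y ^ m * (alpha_beta_fps a b m' - 1)
          + (\<Sum>s=1..m. Y ^ (m - s) * (alpha_beta_fps a b (m' + s) - 1)))
       = fps_const (alpha_beta_fps a b m $ 1) * fps_X * Y ^ m * alpha_beta_fps a b m'
          - (alpha_beta_fps a b m - 1)"
proof (induction m)
  case 0
  then show ?case by (simp add: alpha_beta_fps_def alpha_fps_def algebra_simps)
next
  case (Suc m)
  let ?K = "alpha_beta_fps a b"
  have "(\<Sum>s=1..Suc m. Y ^ (Suc m - s) * (?K (m' + s) - 1))
      = Y * (\<Sum>s=1..m. Y ^ (m - s) * (?K (m' + s) - 1)) + (?K (m' + Suc m) - 1)"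
  proof -
    have "(\<Sum>s=1..m. Y ^ (Suc m - s) * (?K (m' + s) - 1)) = Y * (\<Sum>s=1..m. Y ^ (m - s) * (?K (m' + s) - 1))"
      unfolding sum_distrib_left by (rule sum.cong) (auto simp: Suc_diff_le algebra_simps)
    then show ?thesis by simp
  qed
  then have LHS: "fps_X * (fps_const b * Y ^ Suc m * (?K m' - 1) + (\<Sum>s=1..Suc m. Y ^ (Suc m - s) * (?K (m' + s) - 1)))
     = Y * (fps_X * (fps_const b * Y ^ m * (?K m' - 1) + (\<Sum>s=1..m. Y ^ (m - s) * (?K (m' + s) - 1))))
       + fps_X * (?K (m' + Suc m) - 1)"
    by (simp add: algebra_simps)
  have add: "?K (m' + Suc m) = ?K (Suc m) + fps_const (a ^ Suc m) * Y ^ Suc m * (?K m' - (1 + fps_const b * fps_X))"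
    using alpha_beta_fps_add[of a b "Suc m" m'] unfolding Y_def by (simp add: add.commute)
  show ?case
    unfolding LHS Suc add alpha_beta_fps_nth_1_Suc unfolding alpha_beta_fps_Suc[of a b m]
    by (simp add: Y_def algebra_simps fps_const_add[symmetric] del: fps_const_add)
qed

lemma alpha_beta_fps_identity_div:
  fixes a b :: "'a::field"
  defines "Y \<equiv> 1 + fps_X :: 'a fps"
  defines "H \<equiv> \<lambda>n. inverse (Y ^ n) * (alpha_beta_fps a b n - 1)"
  shows "fps_X * (fps_const b * H m' + (\<Sum>s=1..m. H (m' + s)))
       = fps_const (alpha_beta_fps a b m $ 1) * fps_X * (inverse (Y ^ m') * alpha_beta_fps a b m')
         - inverse (Y ^ (m + m')) * (alpha_beta_fps a b m - 1)"
proof -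
  let ?I = "inverse (Y ^ (m + m'))"
  have Im: "?I * Y ^ m = inverse (Y ^ m')"
    unfolding Y_def by (rule fps_one_plus_X_power_inverse_mult) simp
  have "?I * (\<Sum>s=1..m. Y ^ (m - s) * (alpha_beta_fps a b (m' + s) - 1)) = (\<Sum>s=1..m. H (m' + s))"
    unfolding sum_distrib_left H_def
  proof (rule sum.cong)
    fix s assume "s \<in> {1..m}"
    then have "?I * Y ^ (m - s) = inverse (Y ^ (m' + s))"
      unfolding Y_def by (intro fps_one_plus_X_power_inverse_mult) auto
    then show "?I * (Y ^ (m - s) * (alpha_beta_fps a b (m' + s) - 1))
        = inverse (Y ^ (m' + s)) * (alpha_beta_fps a b (m' + s) - 1)"
      by (simp add: mult.assoc[symmetric])
  qed simp
  moreover have "?I * (fps_const b * Y ^ m * (alpha_beta_fps a b m' - 1)) = fps_const b * H m'"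
    unfolding H_def using Im by (simp add: algebra_simps)
  ultimately have "?I * (fps_X * (fps_const b * Y ^ m * (alpha_beta_fps a b m' - 1)
        + (\<Sum>s=1..m. Y ^ (m - s) * (alpha_beta_fps a b (m' + s) - 1))))
      = fps_X * (fps_const b * H m' + (\<Sum>s=1..m. H (m' + s)))"
    by (simp add: algebra_simps)
  moreover have "?I * (fps_const (alpha_beta_fps a b m $ 1) * fps_X * Y ^ m * alpha_beta_fps a b m'
        - (alpha_beta_fps a b m - 1))
      = fps_const (alpha_beta_fps a b m $ 1) * fps_X * (inverse (Y ^ m') * alpha_beta_fps a b m')
        - ?I * (alpha_beta_fps a b m - 1)"
    using Im by (simp add: algebra_simps)
  ultimately show ?thesis
    using alpha_beta_fps_identity[of b m a m'] unfolding Y_def by metis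
qed

lemma fps_nth_mult_eq_if_X_mult_eq:
  fixes F G K T :: "'a::comm_ring_1 fps"
  assumes "fps_X * F = fps_const (G $ 1) * fps_X * K - G"
  shows "(F * T) $ Suc n = - (G * (T - fps_const ((K * T) $ Suc n) * fps_X ^ Suc n)) $ Suc (Suc n)"
proof -
  define E where "E = (K * T) $ Suc n"
  have "(F * T) $ Suc n = (fps_X * F * T) $ Suc (Suc n)"
    by (simp add: mult.assoc)
  also have "fps_X * F * T = fps_const (G $ 1) * (fps_X * (K * T)) - G * T"
    unfolding assms by (simp add: algebra_simps)
  finally have "(F * T) $ Suc n = G $ 1 * E - (G * T) $ Suc (Suc n)"
    by (simp add: E_def)
  moreover have "(G * (fps_const E * fps_X ^ Suc n)) $ Suc (Suc n) = E * G $ 1"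
    using fps_const_X_power_mult_nth[of E "Suc n" G] by (simp add: mult.commute)
  ultimately show ?thesis
    by (simp add: E_def right_diff_distrib del: power_Suc)
qed

text \<open>The columns of both sides are \<open>(1+x)^n\<close>-multiples of common series \<open>B j\<close>, except for
  the last one or two, which are \<open>alpha_beta_fps\<close>-series; removing the common factors by
  \<open>det_coeff_mat_mult\<close> reduces the claim to \<open>alpha_beta_fps_identity_div\<close>.\<close>

lemma det_coeff_mat_recurrence:
  fixes a b :: "'a::field" and B :: "nat \<Rightarrow> 'a fps" and m m' k0 :: nat
  assumes B0: "\<And>j. 1 \<le> j \<Longrightarrow> j \<le> k0 \<Longrightarrow> B j $ 0 = 1"
  defines "Y \<equiv> 1 + fps_X :: 'a fps"
  defines "cu \<equiv> \<lambda>s j. if j \<le> k0 then Y ^ (m' + s) * B j else alpha_beta_fps a b (m' + s)"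
  defines "ct \<equiv> \<lambda>j. if j \<le> k0 then Y ^ (m + m') * B j
                    else if j = Suc k0 then Y ^ m * alpha_beta_fps a b m' else alpha_beta_fps a b m"
  shows "det (coeff_mat (Suc (Suc k0)) ct)
       = (\<Sum>s=1..m. det (coeff_mat (Suc k0) (cu s))) + b * det (coeff_mat (Suc k0) (cu 0))"
proof -
  define T where "T = hess_series B k0"
  define H where "H = (\<lambda>n. inverse (Y ^ n) * (alpha_beta_fps a b n - 1))"
  define K' where "K' = inverse (Y ^ m') * alpha_beta_fps a b m'"
  define H' where "H' = inverse (Y ^ (m + m')) * (alpha_beta_fps a b m - 1)"
  define c where "c = (\<lambda>j. if j \<le> k0 then B j else K')"
  define E where "E = (K' * T) $ Suc k0"
  have Y0: "(Y ^ n) $ 0 = 1" for n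
    by (simp add: Y_def fps_one_plus_X_power_nth)
  have det_cu: "det (coeff_mat (Suc k0) (cu s)) = (-1)^k0 * (H (m' + s) * T) $ Suc k0" for s
    using det_coeff_mat_mult[of "Y ^ (m' + s)" k0 B "cu s"] B0
    by (simp add: Y0 cu_def H_def T_def alpha_beta_fps_nth_0)
  have det_ct: "det (coeff_mat (Suc (Suc k0)) ct)
      = (-1)^(Suc k0) * (H' * (T - fps_const E * fps_X ^ Suc k0)) $ Suc (Suc k0)"
  proof -
    have "ct j = Y ^ (m + m') * c j" if "1 \<le> j" "j \<le> Suc k0" for j
      using that fps_one_plus_X_power_inverse[of m']
      by (auto simp: ct_def c_def K'_def Y_def power_add algebra_simps)
    moreover have "c j $ 0 = 1" if "1 \<le> j" "j \<le> Suc k0" for j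
      using that B0 by (simp add: c_def K'_def Y_def fps_one_plus_X_power_nth alpha_beta_fps_nth_0)
    moreover have "hess_series c (Suc k0) = T - fps_const E * fps_X ^ Suc k0"
    proof -
      have "hess_series c k0 = T" unfolding T_def by (rule hess_series_cong) (simp add: c_def)
      then show ?thesis by (simp add: c_def E_def)
    qed
    ultimately show ?thesis
      using det_coeff_mat_mult[of "Y ^ (m + m')" "Suc k0" c ct] Y0
      by (simp add: ct_def H'_def alpha_beta_fps_nth_0 del: power_Suc)
  qed
  have "((fps_const b * H m' + (\<Sum>s=1..m. H (m' + s))) * T) $ Suc k0
      = - (H' * (T - fps_const E * fps_X ^ Suc k0)) $ Suc (Suc k0)"
    unfolding E_def
  proof (rule fps_nth_mult_eq_if_X_mult_eq)
    have "fps_X * (fps_const b * H m' + (\<Sum>s=1..m. H (m' + s)))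
        = fps_const (alpha_beta_fps a b m $ 1) * fps_X * K' - H'"
      unfolding H_def K'_def H'_def Y_def by (rule alpha_beta_fps_identity_div)
    moreover have "H' $ 1 = alpha_beta_fps a b m $ 1"
      unfolding H'_def by (simp add: Y0 alpha_beta_fps_nth_0)
    ultimately show "fps_X * (fps_const b * H m' + (\<Sum>s=1..m. H (m' + s))) = fps_const (H' $ 1) * fps_X * K' - H'"
      by simp
  qed
  moreover have "(\<Sum>s=1..m. det (coeff_mat (Suc k0) (cu s))) + b * det (coeff_mat (Suc k0) (cu 0))
      = (-1)^k0 * ((fps_const b * H m' + (\<Sum>s=1..m. H (m' + s))) * T) $ Suc k0"
  proof -
    have "(fps_const b * H m' + (\<Sum>s=1..m. H (m' + s))) * T
        = fps_const b * (H m' * T) + (\<Sum>s=1..m. H (m' + s) * T)"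
      by (simp add: distrib_right sum_distrib_right mult.assoc)
    then have "((fps_const b * H m' + (\<Sum>s=1..m. H (m' + s))) * T) $ Suc k0
        = b * (H m' * T) $ Suc k0 + (\<Sum>s=1..m. (H (m' + s) * T) $ Suc k0)"
      by (simp only: fps_add_nth fps_mult_left_const_nth fps_sum_nth)
    then show ?thesis unfolding det_cu by (simp add: algebra_simps sum_distrib_left)
  qed
  ultimately show ?thesis
    unfolding det_ct by simp
qed

lemma Amat_append_one:
  assumes "1 \<le> num_ones u"
  shows "Amat \<alpha> \<beta> (u @ True # replicate m False) = coeff_mat (Suc (num_ones u)) (\<lambda>j.
     if j < num_ones u then (1 + fps_X) ^ m * Acol_fps \<alpha> \<beta> u j
     else if j = num_ones u then (1 + fps_X) ^ m * alpha_beta_fps (1/\<alpha>) (1/\<beta>) (lam u (num_ones u))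
     else alpha_beta_fps (1/\<alpha>) (1/\<beta>) m)"
proof -
  have "Acol_fps \<alpha> \<beta> (u @ True # replicate m False) j = (
     if j < num_ones u then (1 + fps_X) ^ m * Acol_fps \<alpha> \<beta> u j
     else if j = num_ones u then (1 + fps_X) ^ m * alpha_beta_fps (1/\<alpha>) (1/\<beta>) (lam u (num_ones u))
     else alpha_beta_fps (1/\<alpha>) (1/\<beta>) m)" if j: "1 \<le> j" "j \<le> Suc (num_ones u)" for j
  proof -
    consider "j < num_ones u" | "j = num_ones u" | "j = Suc (num_ones u)" using j by linarith
    then show ?thesis
    proof cases
      case 1
      then show ?thesis
        using j by (simp add: Acol_fps_def lam_append_one_replicate_False power_add algebra_simps)
    qed (use assms in \<open>simp_all add: Acol_fps_def lam_append_one_replicate_False\<close>)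
  qed
  moreover have "num_ones (u @ True # replicate m False) = Suc (num_ones u)" by simp
  ultimately show ?thesis unfolding Amat_eq_coeff_mat by (simp only:) (rule coeff_mat_cong)
qed

lemma Amat_append_replicate_False:
  assumes "1 \<le> num_ones u"
  shows "Amat \<alpha> \<beta> (u @ replicate s False) = coeff_mat (num_ones u) (\<lambda>j.
     if j < num_ones u then (1 + fps_X) ^ s * Acol_fps \<alpha> \<beta> u j
     else alpha_beta_fps (1/\<alpha>) (1/\<beta>) (lam u (num_ones u) + s))"
proof -
  have "Acol_fps \<alpha> \<beta> (u @ replicate s False) j = (
     if j < num_ones u then (1 + fps_X) ^ s * Acol_fps \<alpha> \<beta> u j
     else alpha_beta_fps (1/\<alpha>) (1/\<beta>) (lam u (num_ones u) + s))" if "1 \<le> j" "j \<le> num_ones u" for j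
  proof (cases "j < num_ones u")
    case True
    then show ?thesis
      using that by (simp add: Acol_fps_def lam_append_replicate_False power_add algebra_simps)
  next
    case False
    then have "j = num_ones u" using that by simp
    then show ?thesis using assms by (simp add: Acol_fps_def lam_append_replicate_False lam_eq_0)
  qed
  moreover have "num_ones (u @ replicate s False) = num_ones u" by simp
  ultimately show ?thesis unfolding Amat_eq_coeff_mat by (simp only:) (rule coeff_mat_cong)
qed

lemma det_Amat_recurrence:
  fixes \<alpha> \<beta> :: "'a::field"
  assumes u: "1 \<le> num_ones u"
  shows "det (Amat \<alpha> \<beta> (u @ True # replicate m False))
     = (\<Sum>s=1..m. det (Amat \<alpha> \<beta> (u @ replicate s False))) + (1/\<beta>) * det (Amat \<alpha> \<beta> u)"
proof -
  define k0 where "k0 = num_ones u - 1"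
  have k0: "num_ones u = Suc k0" using u unfolding k0_def by simp
  define m' where "m' = lam u (Suc k0)"
  define B where "B = (\<lambda>j. inverse ((1 + fps_X) ^ m') * Acol_fps \<alpha> \<beta> u j)"
  have B: "(1 + fps_X) ^ (n + m') * B j = (1 + fps_X) ^ n * Acol_fps \<alpha> \<beta> u j"
    and B': "(1 + fps_X) ^ (m' + n) * B j = (1 + fps_X) ^ n * Acol_fps \<alpha> \<beta> u j" for n j
  proof -
    have "(1 + fps_X) ^ (n + m') * B j = (1 + fps_X) ^ n * ((1 + fps_X) ^ m' * inverse ((1 + fps_X) ^ m')) * Acol_fps \<alpha> \<beta> u j"
      by (simp add: B_def power_add mult.assoc)
    then show "(1 + fps_X) ^ (n + m') * B j = (1 + fps_X) ^ n * Acol_fps \<alpha> \<beta> u j"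
      unfolding fps_one_plus_X_power_inverse by simp
    then show "(1 + fps_X) ^ (m' + n) * B j = (1 + fps_X) ^ n * Acol_fps \<alpha> \<beta> u j"
      by (simp only: add.commute)
  qed
  have full: "Amat \<alpha> \<beta> (u @ True # replicate m False) = coeff_mat (Suc (Suc k0)) (\<lambda>j.
      if j \<le> k0 then (1 + fps_X) ^ (m + m') * B j
      else if j = Suc k0 then (1 + fps_X) ^ m * alpha_beta_fps (1/\<alpha>) (1/\<beta>) m'
      else alpha_beta_fps (1/\<alpha>) (1/\<beta>) m)"
    unfolding Amat_append_one[OF u] k0 by (rule coeff_mat_cong) (auto simp: B m'_def[symmetric])
  have cut: "Amat \<alpha> \<beta> (u @ replicate s False) = coeff_mat (Suc k0) (\<lambda>j.
      if j \<le> k0 then (1 + fps_X) ^ (m' + s) * B j else alpha_beta_fps (1/\<alpha>) (1/\<beta>) (m' + s))" for s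
    unfolding Amat_append_replicate_False[OF u] k0 by (rule coeff_mat_cong) (auto simp: B' m'_def[symmetric])
  then have base: "Amat \<alpha> \<beta> u = coeff_mat (Suc k0) (\<lambda>j.
      if j \<le> k0 then (1 + fps_X) ^ (m' + 0) * B j else alpha_beta_fps (1/\<alpha>) (1/\<beta>) (m' + 0))"
    by (metis append_Nil2 replicate_0)
  have B0: "B j $ 0 = 1" for j
    by (simp add: B_def Acol_fps_nth_0 fps_one_plus_X_power_nth)
  show ?thesis
    unfolding full cut base by (rule det_coeff_mat_recurrence) (rule B0)
qed

lemma det_Amat_single_one:
  fixes \<alpha> \<beta> :: "'a::field"
  assumes "num_ones u = 0"
  shows "det (Amat \<alpha> \<beta> (u @ True # replicate m False)) = 1/\<beta> + (\<Sum>p=1..m. (1/\<alpha>)^p)"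
proof -
  let ?c = "Acol_fps \<alpha> \<beta> (u @ True # replicate m False)"
  have "det (Amat \<alpha> \<beta> (u @ True # replicate m False)) = ?c 1 $ 1"
    using det_coeff_mat_Suc[of 0 ?c] assms by (simp add: Amat_eq_coeff_mat)
  also have "\<dots> = 1/\<beta> + (\<Sum>p=1..m. (1/\<alpha>)^p)"
    unfolding Acol_fps_nth using assms by (simp add: lam_append_one_replicate_False binz_def)
  finally show ?thesis .
qed

definition catalan_filling :: "(nat \<Rightarrow> nat \<Rightarrow> bool) \<Rightarrow> (nat \<Rightarrow> nat \<Rightarrow> sym option) \<Rightarrow> bool" where
  "catalan_filling B f \<longleftrightarrow>
     (\<forall>i j. \<not> B i j \<longrightarrow> f i j = None) \<and>
     (\<forall>i j i'. B i j \<and> f i j = Some SA \<and> i' < i \<and> B i' j \<longrightarrow> f i' j = None) \<and>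
     (\<forall>i j j'. B i j \<and> f i j = Some SB \<and> j' < j \<and> B i j' \<longrightarrow> f i j' = None) \<and>
     (\<forall>i j. B i j \<and>
        \<not> (\<exists>i'. i < i' \<and> B i' j \<and> f i' j = Some SA) \<and>
        \<not> (\<exists>j'. j < j' \<and> B i j' \<and> f i j' = Some SB) \<longrightarrow> f i j \<noteq> None)"

lemma catalan_tableau_iff_filling: "catalan_tableau \<tau> f \<longleftrightarrow> catalan_filling (is_box \<tau>) f"
  by (simp add: catalan_tableau_def catalan_filling_def)

lemma catalan_filling_outside: "catalan_filling B f \<Longrightarrow> \<not> B i j \<Longrightarrow> f i j = None"
  unfolding catalan_filling_def by blast

lemma catalan_filling_above_alpha:
  "catalan_filling B f \<Longrightarrow> B i j \<Longrightarrow> f i j = Some SA \<Longrightarrow> i' < i \<Longrightarrow> B i' j \<Longrightarrow> f i' j = None"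
  unfolding catalan_filling_def by blast

lemma catalan_filling_left_of_beta:
  "catalan_filling B f \<Longrightarrow> B i j \<Longrightarrow> f i j = Some SB \<Longrightarrow> j' < j \<Longrightarrow> B i j' \<Longrightarrow> f i j' = None"
  unfolding catalan_filling_def by blast

lemma catalan_filling_filled:
  "catalan_filling B f \<Longrightarrow> B i j \<Longrightarrow> (\<And>i'. i < i' \<Longrightarrow> B i' j \<Longrightarrow> f i' j \<noteq> Some SA)
   \<Longrightarrow> (\<And>j'. j < j' \<Longrightarrow> B i j' \<Longrightarrow> f i j' \<noteq> Some SB) \<Longrightarrow> f i j \<noteq> None"
  unfolding catalan_filling_def by blast

lemma catalan_fillingI:
  assumes "\<And>i j. \<not> B i j \<Longrightarrow> f i j = None"
    "\<And>i j i'. B i j \<Longrightarrow> f i j = Some SA \<Longrightarrow> i' < i \<Longrightarrow> B i' j \<Longrightarrow> f i' j = None"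
    "\<And>i j j'. B i j \<Longrightarrow> f i j = Some SB \<Longrightarrow> j' < j \<Longrightarrow> B i j' \<Longrightarrow> f i j' = None"
    "\<And>i j. B i j \<Longrightarrow> (\<forall>i'. i < i' \<longrightarrow> B i' j \<longrightarrow> f i' j \<noteq> Some SA)
       \<Longrightarrow> (\<forall>j'. j < j' \<longrightarrow> B i j' \<longrightarrow> f i j' \<noteq> Some SB) \<Longrightarrow> f i j \<noteq> None"
  shows "catalan_filling B f"
  unfolding catalan_filling_def using assms by blast

lemma sym_option_cases: "x \<noteq> None \<Longrightarrow> x \<noteq> Some SB \<Longrightarrow> x = Some SA"
  by (metis option.exhaust sym.exhaust)

lemma finite_catalan_fillings:
  assumes "finite {(i,j). B i j}"
  shows "finite {f. catalan_filling B f}"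
proof -
  let ?A = "{(i,j). B i j}"
  let ?S = "{h :: nat \<times> nat \<Rightarrow> sym option. \<forall>x. (x \<in> ?A \<longrightarrow> h x \<in> UNIV) \<and> (x \<notin> ?A \<longrightarrow> h x = None)}"
  have "finite (UNIV :: sym option set)"
  proof -
    have UNIV_eq: "(UNIV :: sym option set) = {None, Some SA, Some SB}"
      using sym_option_cases by blast
    show ?thesis unfolding UNIV_eq by simp
  qed
  then have "finite ?S"
    by (intro finite_set_of_finite_funs) (use assms in auto)
  moreover have "{f. catalan_filling B f} \<subseteq> curry ` ?S"
  proof
    fix f assume "f \<in> {f. catalan_filling B f}"
    then have "case_prod f \<in> ?S" using catalan_filling_outside[of B f] by auto
    moreover have "f = curry (case_prod f)" by simp
    ultimately show "f \<in> curry ` ?S" by blast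
  qed
  ultimately show ?thesis using finite_surj by blast
qed

lemma finite_catalan_tableaux: "finite {f. catalan_tableau \<tau> f}"
proof -
  have "{(i,j). is_box \<tau> i j} \<subseteq> {..num_ones \<tau>} \<times> {..length \<tau>}"
    unfolding is_box_def using lam_le_length[of \<tau>] by (auto intro: order_trans)
  then have "finite {(i,j). is_box \<tau> i j}" by (rule finite_subset) auto
  then show ?thesis unfolding catalan_tableau_iff_filling by (rule finite_catalan_fillings)
qed

definition alpha_free_cols :: "nat \<Rightarrow> nat \<Rightarrow> (nat \<Rightarrow> nat \<Rightarrow> sym option) \<Rightarrow> nat" where
  "alpha_free_cols C K f = card {j \<in> {1..C}. \<forall>i \<in> {1..K}. f i j \<noteq> Some SA}"

definition beta_free_rows :: "nat \<Rightarrow> nat \<Rightarrow> (nat \<Rightarrow> nat \<Rightarrow> sym option) \<Rightarrow> nat" where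
  "beta_free_rows C K f = card {i \<in> {1..K}. \<forall>j \<in> {1..C}. f i j \<noteq> Some SB}"

section \<open>Removing the last row of a Catalan filling\<close>

text \<open>Rows \<open>i < k\<close> of the full diagram have length \<open>L i + m\<close> and row \<open>k\<close> has length \<open>m\<close>;
  \<open>col_embed s\<close> maps the columns of the cut diagram to the columns that survive the deletion.\<close>

locale last_row_removal =
  fixes k m :: nat and L :: "nat \<Rightarrow> nat"
  assumes k_pos: "1 \<le> k"
begin

definition box_full :: "nat \<Rightarrow> nat \<Rightarrow> bool" where
  "box_full i j \<longleftrightarrow> (1 \<le> i \<and> i < k \<and> 1 \<le> j \<and> j \<le> L i + m) \<or> (i = k \<and> 1 \<le> j \<and> j \<le> m)"

definition box_cut :: "nat \<Rightarrow> nat \<Rightarrow> nat \<Rightarrow> bool" where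
  "box_cut s i j \<longleftrightarrow> 1 \<le> i \<and> i < k \<and> 1 \<le> j \<and> j \<le> L i + s"

definition col_embed :: "nat \<Rightarrow> nat \<Rightarrow> nat" where
  "col_embed s j = (if j \<le> s then j else j + (m - s))"

definition last_row :: "nat \<Rightarrow> nat \<Rightarrow> sym option" where
  "last_row s j = (if j = s \<and> 1 \<le> s then Some SB else if s < j \<and> j \<le> m then Some SA else None)"

definition add_last_row :: "nat \<Rightarrow> (nat \<Rightarrow> nat \<Rightarrow> sym option) \<Rightarrow> nat \<Rightarrow> nat \<Rightarrow> sym option" where
  "add_last_row s f i j =
     (if i = k then last_row s j else if j \<le> s then f i j else if j \<le> m then None else f i (j - (m - s)))"

definition del_last_row :: "nat \<Rightarrow> (nat \<Rightarrow> nat \<Rightarrow> sym option) \<Rightarrow> nat \<Rightarrow> nat \<Rightarrow> sym option" where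
  "del_last_row s f i j = (if i < k then f i (col_embed s j) else None)"

lemma add_last_row_middle: "i \<noteq> k \<Longrightarrow> s < j \<Longrightarrow> j \<le> m \<Longrightarrow> add_last_row s f i j = None"
  unfolding add_last_row_def by auto

lemma add_last_row_last: "add_last_row s f k j = last_row s j"
  unfolding add_last_row_def by auto

lemma box_full_last: "box_full k j \<longleftrightarrow> 1 \<le> j \<and> j \<le> m"
  unfolding box_full_def by auto

lemma box_full_row_range: "box_full i j \<Longrightarrow> 1 \<le> i \<and> i \<le> k"
  unfolding box_full_def using k_pos by auto

lemma box_full_middle: "1 \<le> i \<Longrightarrow> i < k \<Longrightarrow> 1 \<le> j \<Longrightarrow> j \<le> m \<Longrightarrow> box_full i j"
  unfolding box_full_def by auto

lemma box_cut_row_less: "box_cut s i j \<Longrightarrow> i < k"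
  unfolding box_cut_def by auto

context
  fixes s :: nat
  assumes s_le: "s \<le> m"
begin

lemma col_embed_less_iff: "col_embed s j < col_embed s j' \<longleftrightarrow> j < j'"
  unfolding col_embed_def using s_le by auto

lemma inj_col_embed: "inj (col_embed s)"
  by (rule injI) (metis col_embed_less_iff not_less_iff_gr_or_eq)

lemma col_embed_cases:
  obtains "s < j" "j \<le> m" | j0 where "j = col_embed s j0"
proof (cases "s < j \<and> j \<le> m")
  case False
  then have "j = col_embed s (if j \<le> s then j else j - (m - s))"
    unfolding col_embed_def using s_le by auto
  then show ?thesis using that(2) by blast
qed (use that(1) in blast)

lemma col_embed_mem_iff: "m \<le> C \<Longrightarrow> col_embed s j \<in> {1..C} \<longleftrightarrow> j \<in> {1..C - (m - s)}"
  unfolding col_embed_def using s_le by auto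

lemma add_last_row_col_embed: "i \<noteq> k \<Longrightarrow> add_last_row s f i (col_embed s j) = f i j"
  unfolding add_last_row_def col_embed_def using s_le by auto

lemma box_full_col_embed: "i < k \<Longrightarrow> box_full i (col_embed s j) \<longleftrightarrow> box_cut s i j"
  unfolding box_full_def box_cut_def col_embed_def using s_le by auto

lemma last_row_col_embed: "last_row s (col_embed s j) \<noteq> Some SA"
  unfolding last_row_def col_embed_def using s_le by auto

context
  fixes f assumes f: "catalan_filling (box_cut s) f"
begin

lemma add_last_row_outside: "\<not> box_full i j \<Longrightarrow> add_last_row s f i j = None"
proof (cases "i = k")
  case True
  then show "\<not> box_full i j \<Longrightarrow> ?thesis" using s_le by (auto simp: add_last_row_last last_row_def box_full_last)
next
  case False
  assume nb: "\<not> box_full i j"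
  show ?thesis
  proof (cases j rule: col_embed_cases)
    case (2 j0)
    have "\<not> box_cut s i j0"
      using nb box_full_col_embed[of i j0] box_cut_row_less[of s i j0] 2 by (cases "i < k") auto
    then show ?thesis using 2 add_last_row_col_embed[OF False] catalan_filling_outside[OF f] by simp
  qed (use False add_last_row_middle in blast)
qed

lemma add_last_row_above_alpha:
  assumes b: "box_full i j" and a: "add_last_row s f i j = Some SA" and ii: "i' < i" and b': "box_full i' j"
  shows "add_last_row s f i' j = None"
proof -
  have i'k: "i' < k" using box_full_row_range[OF b] ii by simp
  show ?thesis
  proof (cases j rule: col_embed_cases)
    case (2 j0)
    then have ik: "i \<noteq> k" using a last_row_col_embed by (auto simp: add_last_row_last)
    then have "i < k" using box_full_row_range[OF b] by simp
    then have "f i' j0 = None"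
      using catalan_filling_above_alpha[OF f, of i j0 i'] a b b' ii i'k 2
        add_last_row_col_embed[OF ik] box_full_col_embed by simp
    then show ?thesis using 2 add_last_row_col_embed i'k by simp
  qed (use add_last_row_middle i'k in simp)
qed

lemma add_last_row_left_of_beta:
  assumes b: "box_full i j" and bb: "add_last_row s f i j = Some SB" and jj: "j' < j" and b': "box_full i j'"
  shows "add_last_row s f i j' = None"
proof (cases "i = k")
  case True then show ?thesis using bb jj by (auto simp: add_last_row_last last_row_def split: if_splits)
next
  case False
  then have ik: "i < k" using box_full_row_range[OF b] by simp
  obtain j0 where j: "j = col_embed s j0"
    using bb add_last_row_middle[OF False] by (cases j rule: col_embed_cases) auto
  have fj0: "f i j0 = Some SB" and bj0: "box_cut s i j0"
    using bb b j add_last_row_col_embed[OF False] box_full_col_embed[OF ik] by auto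
  show ?thesis
  proof (cases j' rule: col_embed_cases)
    case (2 j1)
    then have "j1 < j0" and "box_cut s i j1"
      using jj j col_embed_less_iff b' box_full_col_embed[OF ik] by auto
    then have "f i j1 = None" using catalan_filling_left_of_beta[OF f bj0 fj0] by blast
    then show ?thesis using 2 add_last_row_col_embed[OF False] by simp
  qed (use add_last_row_middle[OF False] in simp)
qed

lemma add_last_row_filled:
  assumes b: "box_full i j"
    and noA: "\<forall>i'. i < i' \<longrightarrow> box_full i' j \<longrightarrow> add_last_row s f i' j \<noteq> Some SA"
    and noB: "\<forall>j'. j < j' \<longrightarrow> box_full i j' \<longrightarrow> add_last_row s f i j' \<noteq> Some SB"
  shows "add_last_row s f i j \<noteq> None"
proof (cases "i = k")
  case True
  then have j: "1 \<le> j" "j \<le> m" using b box_full_last by auto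
  show ?thesis
  proof (cases "j < s")
    case True
    then have "box_full k s" and "add_last_row s f k s = Some SB"
      using j s_le by (auto simp: box_full_last add_last_row_last last_row_def)
    then show ?thesis using noB True \<open>i = k\<close> by blast
  qed (use j \<open>i = k\<close> in \<open>auto simp: add_last_row_last last_row_def\<close>)
next
  case False
  then have ik: "i < k" using box_full_row_range[OF b] by auto
  show ?thesis
  proof (cases j rule: col_embed_cases)
    case 1
    then have "box_full k j" and "add_last_row s f k j = Some SA"
      by (auto simp: box_full_last add_last_row_last last_row_def)
    then show ?thesis using noA ik by blast
  next
    case (2 j0)
    have bj0: "box_cut s i j0" using box_full_col_embed[OF ik] b 2 by simp
    have "f i j0 \<noteq> None"
    proof (rule catalan_filling_filled[OF f bj0])
      fix i' assume ii: "i < i'" and b': "box_cut s i' j0"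
      then have i'k: "i' < k" by (simp add: box_cut_row_less)
      then have "box_full i' j" using box_full_col_embed[OF i'k] b' 2 by simp
      then have "add_last_row s f i' j \<noteq> Some SA" using noA ii by blast
      then show "f i' j0 \<noteq> Some SA" using 2 add_last_row_col_embed[of i' f j0] i'k by simp
    next
      fix j' assume jj: "j0 < j'" and b': "box_cut s i j'"
      then have "box_full i (col_embed s j')" and "j < col_embed s j'"
        using box_full_col_embed[OF ik] col_embed_less_iff 2 by auto
      then have "add_last_row s f i (col_embed s j') \<noteq> Some SB" using noB by blast
      then show "f i j' \<noteq> Some SB" using add_last_row_col_embed[OF False] by simp
    qed
    then show ?thesis using 2 add_last_row_col_embed[OF False] by simp
  qed
qed

lemma add_last_row_catalan: "catalan_filling box_full (add_last_row s f)"
  using add_last_row_outside add_last_row_above_alpha add_last_row_left_of_beta add_last_row_filled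
  by (intro catalan_fillingI) blast+

lemma del_add_last_row: "del_last_row s (add_last_row s f) = f"
proof (intro ext)
  fix i j show "del_last_row s (add_last_row s f) i j = f i j"
  proof (cases "i < k")
    case False
    then have "\<not> box_cut s i j" using box_cut_row_less by blast
    then show ?thesis using catalan_filling_outside[OF f] False by (simp add: del_last_row_def)
  qed (simp add: del_last_row_def add_last_row_col_embed)
qed

end

context
  fixes f assumes f: "catalan_filling box_full f" and row: "\<forall>j. f k j = last_row s j"
begin

lemma add_del_last_row: "add_last_row s (del_last_row s f) = f"
proof (intro ext)
  fix i j show "add_last_row s (del_last_row s f) i j = f i j"
  proof (cases "i = k")
    case True then show ?thesis using row by (simp add: add_last_row_last)
  next
    case False
    show ?thesis
    proof (cases j rule: col_embed_cases)
      case 1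
      have "f i j = None"
      proof (cases "1 \<le> i \<and> i < k")
        case True
        have "box_full k j" and "f k j = Some SA" using 1 row by (auto simp: box_full_last last_row_def)
        moreover have "box_full i j" using True 1 by (intro box_full_middle) auto
        ultimately show ?thesis using catalan_filling_above_alpha[OF f] True by blast
      next
        case False
        then have "\<not> box_full i j" using box_full_row_range \<open>i \<noteq> k\<close> by fastforce
        then show ?thesis using catalan_filling_outside[OF f] by blast
      qed
      then show ?thesis using add_last_row_middle[OF False] 1 by simp
    next
      case (2 j0)
      have "\<not> i < k \<Longrightarrow> f i j = None"
        using catalan_filling_outside[OF f] box_full_row_range False by fastforce
      then show ?thesis using 2 add_last_row_col_embed[OF False] by (simp add: del_last_row_def)
    qed
  qed
qed

lemma del_last_row_filled:
  assumes b: "box_cut s i j"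
    and noA: "\<forall>i'. i < i' \<longrightarrow> box_cut s i' j \<longrightarrow> del_last_row s f i' j \<noteq> Some SA"
    and noB: "\<forall>j'. j < j' \<longrightarrow> box_cut s i j' \<longrightarrow> del_last_row s f i j' \<noteq> Some SB"
  shows "del_last_row s f i j \<noteq> None"
proof -
  have ik: "i < k" using b box_cut_row_less by blast
  have "f i (col_embed s j) \<noteq> None"
  proof (rule catalan_filling_filled[OF f])
    show "box_full i (col_embed s j)" using box_full_col_embed[OF ik] b by simp
  next
    fix i' assume ii: "i < i'" and b': "box_full i' (col_embed s j)"
    show "f i' (col_embed s j) \<noteq> Some SA"
    proof (cases "i' < k")
      case True
      then have "box_cut s i' j" using b' box_full_col_embed by blast
      then show ?thesis using noA ii True by (auto simp: del_last_row_def)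
    next
      case False
      then have "i' = k" using box_full_row_range[OF b'] by simp
      then show ?thesis using row last_row_col_embed by simp
    qed
  next
    fix j' assume jj: "col_embed s j < j'" and b': "box_full i j'"
    show "f i j' \<noteq> Some SB"
    proof (cases j' rule: col_embed_cases)
      case 1
      then have "box_full k j'" and "f k j' = Some SA" using row by (auto simp: box_full_last last_row_def)
      then show ?thesis using catalan_filling_above_alpha[OF f _ _ ik b'] by simp
    next
      case (2 j1)
      then have "j < j1" and "box_cut s i j1"
        using jj col_embed_less_iff b' box_full_col_embed[OF ik] by auto
      then show ?thesis using noB ik 2 by (simp add: del_last_row_def)
    qed
  qed
  then show ?thesis using ik by (simp add: del_last_row_def)
qed

lemma del_last_row_catalan: "catalan_filling (box_cut s) (del_last_row s f)"
proof (rule catalan_fillingI)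
  fix i j assume nb: "\<not> box_cut s i j"
  show "del_last_row s f i j = None"
    using box_full_col_embed[of i j] nb catalan_filling_outside[OF f] by (simp add: del_last_row_def)
next
  fix i j i' assume b: "box_cut s i j" and a: "del_last_row s f i j = Some SA"
    and ii: "i' < i" and b': "box_cut s i' j"
  have ik: "i < k" "i' < k" using box_cut_row_less b b' by auto
  then have "box_full i (col_embed s j)" "box_full i' (col_embed s j)"
    and "f i (col_embed s j) = Some SA"
    using box_full_col_embed b b' a by (auto simp: del_last_row_def)
  then have "f i' (col_embed s j) = None" using catalan_filling_above_alpha[OF f] ii by blast
  then show "del_last_row s f i' j = None" using ik by (simp add: del_last_row_def)
next
  fix i j j' assume b: "box_cut s i j" and a: "del_last_row s f i j = Some SB"
    and jj: "j' < j" and b': "box_cut s i j'"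
  have ik: "i < k" using box_cut_row_less b by auto
  then have "box_full i (col_embed s j)" "box_full i (col_embed s j')"
    and "f i (col_embed s j) = Some SB" and "col_embed s j' < col_embed s j"
    using box_full_col_embed b b' a jj col_embed_less_iff by (auto simp: del_last_row_def)
  then have "f i (col_embed s j') = None" using catalan_filling_left_of_beta[OF f] by blast
  then show "del_last_row s f i j' = None" using ik by (simp add: del_last_row_def)
qed (use del_last_row_filled in blast)

end

lemma alpha_free_cols_add_last_row:
  assumes mC: "m \<le> C"
  shows "alpha_free_cols C k (add_last_row s f) = alpha_free_cols (C - (m - s)) (k - 1) f"
proof -
  let ?A = "{j \<in> {1..C}. \<forall>i \<in> {1..k}. add_last_row s f i j \<noteq> Some SA}"
  let ?B = "{j \<in> {1..C - (m - s)}. \<forall>i \<in> {1..k - 1}. f i j \<noteq> Some SA}"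
  have k_split: "{1..k} = insert k {1..k - 1}" using k_pos by auto
  have low: "add_last_row s f i (col_embed s j) = f i j" if "i \<in> {1..k - 1}" for i j
    using that k_pos add_last_row_col_embed by auto
  have emb: "col_embed s j0 \<in> ?A \<longleftrightarrow> j0 \<in> ?B" for j0
  proof -
    have "(\<forall>i\<in>{1..k}. add_last_row s f i (col_embed s j0) \<noteq> Some SA) \<longleftrightarrow> (\<forall>i\<in>{1..k - 1}. f i j0 \<noteq> Some SA)"
      unfolding k_split by (simp add: add_last_row_last last_row_col_embed low)
    then show ?thesis using col_embed_mem_iff[OF mC, of j0] by blast
  qed
  have mid: "j \<notin> ?A" if "s < j" "j \<le> m" for j
  proof -
    have "add_last_row s f k j = Some SA" using that by (simp add: add_last_row_last last_row_def)
    then show ?thesis using k_pos by fastforce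
  qed
  have "?A \<subseteq> col_embed s ` ?B"
  proof
    fix j assume "j \<in> ?A"
    then show "j \<in> col_embed s ` ?B" using emb mid by (cases j rule: col_embed_cases) auto
  qed
  moreover have "col_embed s ` ?B \<subseteq> ?A" using emb by auto
  ultimately have "?A = col_embed s ` ?B" by blast
  then show ?thesis
    unfolding alpha_free_cols_def using card_image[OF inj_on_subset[OF inj_col_embed subset_UNIV]] by simp
qed

lemma beta_free_rows_add_last_row:
  assumes mC: "m \<le> C"
  shows "beta_free_rows C k (add_last_row s f) = beta_free_rows (C - (m - s)) (k - 1) f + (if s = 0 then 1 else 0)"
proof -
  let ?A = "{i \<in> {1..k}. \<forall>j \<in> {1..C}. add_last_row s f i j \<noteq> Some SB}"
  let ?B = "{i \<in> {1..k - 1}. \<forall>j \<in> {1..C - (m - s)}. f i j \<noteq> Some SB}"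
  have upper: "(\<forall>j \<in> {1..C}. add_last_row s f i j \<noteq> Some SB) \<longleftrightarrow> (\<forall>j \<in> {1..C - (m - s)}. f i j \<noteq> Some SB)"
    if ik: "i \<noteq> k" for i
  proof
    assume "\<forall>j \<in> {1..C}. add_last_row s f i j \<noteq> Some SB"
    then show "\<forall>j \<in> {1..C - (m - s)}. f i j \<noteq> Some SB"
      using col_embed_mem_iff[OF mC] add_last_row_col_embed[OF ik] by metis
  next
    assume noB: "\<forall>j \<in> {1..C - (m - s)}. f i j \<noteq> Some SB"
    show "\<forall>j \<in> {1..C}. add_last_row s f i j \<noteq> Some SB"
    proof
      fix j assume "j \<in> {1..C}"
      then show "add_last_row s f i j \<noteq> Some SB"
        using noB col_embed_mem_iff[OF mC] add_last_row_col_embed[OF ik] add_last_row_middle[OF ik]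
        by (cases j rule: col_embed_cases) auto
    qed
  qed
  have last: "(\<forall>j \<in> {1..C}. add_last_row s f k j \<noteq> Some SB) \<longleftrightarrow> s = 0"
    using s_le mC by (auto simp: add_last_row_last last_row_def)
  have "?A = {i \<in> {1..k - 1}. \<forall>j \<in> {1..C}. add_last_row s f i j \<noteq> Some SB}
      \<union> {i \<in> {k}. \<forall>j \<in> {1..C}. add_last_row s f i j \<noteq> Some SB}"
    using k_pos by auto
  also have "{i \<in> {1..k - 1}. \<forall>j \<in> {1..C}. add_last_row s f i j \<noteq> Some SB} = ?B"
  proof -
    have "i \<noteq> k" if "i \<in> {1..k - 1}" for i using that k_pos by auto
    then show ?thesis using upper by blast
  qed
  also have "{i \<in> {k}. \<forall>j \<in> {1..C}. add_last_row s f i j \<noteq> Some SB} = (if s = 0 then {k} else {})"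
    using last by auto
  finally have "?A = ?B \<union> (if s = 0 then {k} else {})" .
  moreover have "card (?B \<union> (if s = 0 then {k} else {})) = card ?B + (if s = 0 then 1 else 0)"
    using k_pos by (auto simp: card_insert_if)
  ultimately show ?thesis unfolding beta_free_rows_def by simp
qed

end

lemma last_row_alpha:
  assumes f: "catalan_filling box_full f"
    and noB: "\<And>j'. b < j' \<Longrightarrow> f k j' \<noteq> Some SB" and j: "b < j" "j \<le> m"
  shows "f k j = Some SA"
proof (rule sym_option_cases)
  have "box_full k j" using j by (simp add: box_full_last)
  then show "f k j \<noteq> None"
    using box_full_row_range noB j by (intro catalan_filling_filled[OF f]) fastforce+
qed (use noB j in auto)

lemma last_row_shape:
  assumes f: "catalan_filling box_full f"
  obtains s where "s \<le> m" "\<forall>j. f k j = last_row s j"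
proof (cases "\<exists>b. f k b = Some SB")
  case True
  then obtain b where fb: "f k b = Some SB" by blast
  have bb: "box_full k b" using fb catalan_filling_outside[OF f, of k b] by auto
  then have b: "1 \<le> b" "b \<le> m" using box_full_last by auto
  have noB: "f k j \<noteq> Some SB" if "b < j" for j
  proof
    assume fj: "f k j = Some SB"
    then have "box_full k j" using catalan_filling_outside[OF f, of k j] by auto
    then have "f k b = None" using catalan_filling_left_of_beta[OF f _ fj that bb] by blast
    then show False using fb by simp
  qed
  have "f k j = last_row b j" for j
  proof -
    consider "j < b" | "j = b" | "b < j \<and> j \<le> m" | "m < j" by linarith
    then show ?thesis
    proof cases
      case 1
      then show ?thesis
        using catalan_filling_left_of_beta[OF f bb fb 1] catalan_filling_outside[OF f, of k j]
        by (cases "box_full k j") (auto simp: last_row_def)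
    next
      case 3
      then show ?thesis using last_row_alpha[OF f noB] by (simp add: last_row_def)
    qed (use fb b catalan_filling_outside[OF f, of k j] box_full_last in \<open>auto simp: last_row_def\<close>)
  qed
  then show ?thesis using that b by blast
next
  case False
  have "f k j = last_row 0 j" for j
  proof (cases "box_full k j")
    case True
    then show ?thesis using last_row_alpha[OF f, of 0 j] False by (simp add: box_full_last last_row_def)
  next
    case False
    then show ?thesis using catalan_filling_outside[OF f False] by (auto simp: box_full_last last_row_def)
  qed
  then show ?thesis using that by blast
qed

lemma last_row_inj:
  assumes "s \<noteq> s'"
  shows "last_row s \<noteq> last_row s'"
proof
  assume eq: "last_row s = last_row s'"
  show False
  proof (cases "1 \<le> s")
    case True
    then have "last_row s s = Some SB" "last_row s' s \<noteq> Some SB" using assms by (auto simp: last_row_def)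
    then show False using eq by simp
  next
    case False
    then have "last_row s' s' = Some SB" "last_row s s' \<noteq> Some SB" using assms by (auto simp: last_row_def)
    then show False using eq by simp
  qed
qed

lemma catalan_fillings_box_full:
  "{f. catalan_filling box_full f} = (\<Union>s\<in>{0..m}. add_last_row s ` {f. catalan_filling (box_cut s) f})"
proof
  show "{f. catalan_filling box_full f} \<subseteq> (\<Union>s\<in>{0..m}. add_last_row s ` {f. catalan_filling (box_cut s) f})"
  proof
    fix f assume "f \<in> {f. catalan_filling box_full f}"
    then have f: "catalan_filling box_full f" by simp
    obtain s where s: "s \<le> m" "\<forall>j. f k j = last_row s j" using last_row_shape[OF f] by blast
    have "f = add_last_row s (del_last_row s f)" using add_del_last_row[OF s(1) f s(2)] by simp
    moreover have "catalan_filling (box_cut s) (del_last_row s f)" using del_last_row_catalan[OF s(1) f s(2)] .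
    ultimately show "f \<in> (\<Union>s\<in>{0..m}. add_last_row s ` {f. catalan_filling (box_cut s) f})" using s(1) by auto
  qed
qed (use add_last_row_catalan in auto)

lemma sum_catalan_fillings_box_full:
  assumes fin: "\<And>s. finite {f. catalan_filling (box_cut s) f}"
  shows "sum W {f. catalan_filling box_full f}
       = (\<Sum>s=0..m. \<Sum>f\<in>{f. catalan_filling (box_cut s) f}. W (add_last_row s f))"
proof -
  have disj: "add_last_row s ` {f. catalan_filling (box_cut s) f} \<inter> add_last_row s' ` {f. catalan_filling (box_cut s') f} = {}"
    if "s \<noteq> s'" for s s'
  proof -
    have "add_last_row s f1 \<noteq> add_last_row s' f2" for f1 f2
      using last_row_inj[OF that] by (metis add_last_row_last ext)
    then show ?thesis by blast
  qed
  have inj: "inj_on (add_last_row s) {f. catalan_filling (box_cut s) f}" if "s \<le> m" for s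
    by (rule inj_onI) (metis del_add_last_row[OF that] mem_Collect_eq)
  have "sum W {f. catalan_filling box_full f} = (\<Sum>s=0..m. sum W (add_last_row s ` {f. catalan_filling (box_cut s) f}))"
    unfolding catalan_fillings_box_full using fin disj by (intro sum.UNION_disjoint) auto
  also have "\<dots> = (\<Sum>s=0..m. \<Sum>f\<in>{f. catalan_filling (box_cut s) f}. W (add_last_row s f))"
    by (rule sum.cong[OF refl]) (use inj in \<open>simp add: sum.reindex\<close>)
  finally show ?thesis .
qed

end

section \<open>The recurrence for \<open>P(\<tau>)\<close>\<close>

lemma Ptau_append_one:
  fixes \<alpha> \<beta> :: "'a::field"
  shows "Ptau \<alpha> \<beta> (u @ True # replicate m False) =
    (\<Sum>s=0..m. (\<alpha> * \<beta>) ^ (m - s + 1) * (if s = 0 then 1/\<beta> else 1) * Ptau \<alpha> \<beta> (u @ replicate s False))"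
proof -
  interpret R: last_row_removal "Suc (num_ones u)" m "lam u" by unfold_locales simp
  let ?t = "u @ True # replicate m False"
  let ?u = "\<lambda>s. u @ replicate s False"
  have box_t: "is_box ?t = R.box_full"
    by (intro ext) (auto simp: is_box_def R.box_full_def lam_append_one_replicate_False)
  have box_u: "is_box (?u s) = R.box_cut s" for s
    by (intro ext) (auto simp: is_box_def R.box_cut_def lam_append_replicate_False)
  \<comment> \<open>the deleted columns have an \<open>\<alpha>\<close> in the last row, and the last row is \<open>\<beta>\<close>-free iff \<open>s = 0\<close>\<close>
  have wt: "wt \<alpha> \<beta> ?t (R.add_last_row s f)
      = (\<alpha> * \<beta>) ^ (m - s + 1) * (if s = 0 then 1/\<beta> else 1) * wt \<alpha> \<beta> (?u s) f"
    if s: "s \<le> m" for s f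
  proof -
    have "num_ones u \<le> length u" by (rule num_ones_le_length)
    then have mC: "m \<le> length u + m - num_ones u"
      and C: "length u + m - num_ones u - (m - s) = length u + s - num_ones u" using s by auto
    have fc: "fcol ?t (R.add_last_row s f) = fcol (?u s) f"
      using R.alpha_free_cols_add_last_row[OF s mC, of f]
      unfolding fcol_def alpha_free_cols_def C by simp
    have fr: "frow ?t (R.add_last_row s f) = frow (?u s) f + (if s = 0 then 1 else 0)"
      using R.beta_free_rows_add_last_row[OF s mC, of f]
      unfolding frow_def beta_free_rows_def C by simp
    have len: "length ?t = (m - s + 1) + length (?u s)" using s by simp
    show ?thesis unfolding wt_def fc fr len power_add by (simp add: algebra_simps)
  qed
  have "Ptau \<alpha> \<beta> ?t = sum (wt \<alpha> \<beta> ?t) {f. catalan_filling R.box_full f}"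
    unfolding Ptau_def catalan_tableau_iff_filling box_t ..
  also have "\<dots> = (\<Sum>s=0..m. \<Sum>f\<in>{f. catalan_filling (R.box_cut s) f}. wt \<alpha> \<beta> ?t (R.add_last_row s f))"
    using finite_catalan_tableaux[of "?u s" for s]
    by (intro R.sum_catalan_fillings_box_full) (simp add: catalan_tableau_iff_filling box_u)
  also have "\<dots> = (\<Sum>s=0..m. (\<alpha> * \<beta>) ^ (m - s + 1) * (if s = 0 then 1/\<beta> else 1) * Ptau \<alpha> \<beta> (?u s))"
    by (rule sum.cong[OF refl])
      (simp add: wt Ptau_def catalan_tableau_iff_filling box_u sum_distrib_left)
  finally show ?thesis .
qed

lemma Ptau_no_ones:
  fixes \<alpha> \<beta> :: "'a::field"
  assumes "\<alpha> \<noteq> 0" and "num_ones \<tau> = 0"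
  shows "Ptau \<alpha> \<beta> \<tau> = \<beta> ^ length \<tau>"
proof -
  have "\<not> is_box \<tau> i j" for i j using assms(2) by (simp add: is_box_def)
  then have "{f. catalan_tableau \<tau> f} = {\<lambda>i j. None}"
    by (auto simp: catalan_tableau_def intro!: ext)
  moreover have "fcol \<tau> (\<lambda>i j. None) = length \<tau>"
  proof -
    have "{j \<in> {1..length \<tau> - num_ones \<tau>}. \<forall>i\<in>{1..num_ones \<tau>}. (\<lambda>i j. None) i j \<noteq> Some SA}
        = {1..length \<tau>}"
      using assms(2) by auto
    then show ?thesis unfolding fcol_def by simp
  qed
  moreover have "frow \<tau> (\<lambda>i j. None) = 0"
    using assms(2) by (simp add: frow_def)
  ultimately show ?thesis
    using assms(1) by (simp add: Ptau_def wt_def power_mult_distrib power_one_over)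
qed

lemma power_diff_Suc_mult_eq:
  fixes \<alpha> \<beta> :: "'a::comm_semiring_1"
  assumes "s \<le> m"
  shows "(\<alpha> * \<beta>) ^ (m - s + 1) * (\<alpha> ^ s * \<beta> ^ (n + s)) = \<alpha> ^ (m + 1) * \<beta> ^ (n + 1 + m)"
proof -
  have "(\<alpha> * \<beta>) ^ (m - s + 1) * (\<alpha> ^ s * \<beta> ^ (n + s)) = \<alpha> ^ ((m - s + 1) + s) * \<beta> ^ ((m - s + 1) + (n + s))"
    by (simp only: power_add power_mult_distrib mult_ac)
  moreover have "(m - s + 1) + s = m + 1" and "(m - s + 1) + (n + s) = n + 1 + m" using assms by auto
  ultimately show ?thesis by (simp only:)
qed

lemma Ptau_formula_single_one:
  fixes \<alpha> \<beta> :: "'a::field"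
  assumes \<alpha>: "\<alpha> \<noteq> 0" and u: "num_ones u = 0"
  shows "Ptau \<alpha> \<beta> (u @ True # replicate m False)
       = \<alpha> ^ (1 + m) * \<beta> ^ (length u + 1 + m) * det (Amat \<alpha> \<beta> (u @ True # replicate m False))"
proof -
  define Q where "Q = \<alpha> ^ (m + 1) * \<beta> ^ (length u + 1 + m)"
  have summand: "(\<alpha> * \<beta>) ^ (m - s + 1) * c * Ptau \<alpha> \<beta> (u @ replicate s False) = Q * (c * (1/\<alpha>) ^ s)"
    if "s \<le> m" for s c
  proof -
    have inv: "\<alpha> ^ s * (1/\<alpha>) ^ s = 1" using \<alpha> by (simp add: power_one_over)
    have "(\<alpha> * \<beta>) ^ (m - s + 1) * c * \<beta> ^ (length u + s)
        = (\<alpha> * \<beta>) ^ (m - s + 1) * c * \<beta> ^ (length u + s) * (\<alpha> ^ s * (1/\<alpha>) ^ s)"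
      by (simp only: inv mult_1_right)
    also have "\<dots> = (\<alpha> * \<beta>) ^ (m - s + 1) * (\<alpha> ^ s * \<beta> ^ (length u + s)) * (c * (1/\<alpha>) ^ s)"
      by (simp only: mult_ac)
    also have "\<dots> = Q * (c * (1/\<alpha>) ^ s)"
      unfolding Q_def power_diff_Suc_mult_eq[OF that] ..
    finally show ?thesis using Ptau_no_ones[OF \<alpha>] u by simp
  qed
  have "Ptau \<alpha> \<beta> (u @ True # replicate m False) = Q * (\<Sum>s=0..m. (if s = 0 then 1/\<beta> else 1) * (1/\<alpha>) ^ s)"
    unfolding Ptau_append_one sum_distrib_left by (rule sum.cong[OF refl], rule summand) simp
  also have "(\<Sum>s=0..m. (if s = 0 then 1/\<beta> else 1) * (1/\<alpha>) ^ s) = 1/\<beta> + (\<Sum>p=1..m. (1/\<alpha>)^p)"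
    by (simp add: sum.atLeast_Suc_atMost)
  finally show ?thesis unfolding det_Amat_single_one[OF u] Q_def by (simp only: add.commute)
qed

lemma Ptau_formula_step:
  fixes \<alpha> \<beta> :: "'a::field"
  assumes u: "1 \<le> num_ones u"
    and IH: "\<And>s. Ptau \<alpha> \<beta> (u @ replicate s False) = \<alpha> ^ (num_ones u + lam (u @ replicate s False) 1)
               * \<beta> ^ (length u + s) * det (Amat \<alpha> \<beta> (u @ replicate s False))"
  shows "Ptau \<alpha> \<beta> (u @ True # replicate m False)
       = \<alpha> ^ (Suc (num_ones u) + lam (u @ True # replicate m False) 1) * \<beta> ^ (length u + 1 + m)
         * det (Amat \<alpha> \<beta> (u @ True # replicate m False))"
proof -
  define G where "G = (\<lambda>s. det (Amat \<alpha> \<beta> (u @ replicate s False)))"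
  define Q where "Q = \<alpha> ^ (num_ones u + lam u 1) * (\<alpha> ^ (m + 1) * \<beta> ^ (length u + 1 + m))"
  have "(\<alpha> * \<beta>) ^ (m - s + 1) * Ptau \<alpha> \<beta> (u @ replicate s False) = Q * G s" if "s \<le> m" for s
  proof -
    have "lam (u @ replicate s False) 1 = lam u 1 + s" using u by (simp add: lam_append_replicate_False)
    then show ?thesis
      unfolding IH Q_def G_def power_diff_Suc_mult_eq[OF that, symmetric]
      by (simp add: power_add algebra_simps)
  qed
  then have "Ptau \<alpha> \<beta> (u @ True # replicate m False) = Q * (\<Sum>s=0..m. (if s = 0 then 1/\<beta> else 1) * G s)"
    unfolding Ptau_append_one sum_distrib_left
    by (intro sum.cong refl) (simp add: algebra_simps)
  also have "(\<Sum>s=0..m. (if s = 0 then 1/\<beta> else 1) * G s) = det (Amat \<alpha> \<beta> (u @ True # replicate m False))"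
    unfolding det_Amat_recurrence[OF u] G_def by (simp add: sum.atLeast_Suc_atMost add.commute)
  finally show ?thesis
    using u by (simp add: Q_def lam_append_one_replicate_False power_add algebra_simps)
qed

theorem Ptau_eq_det_Amat:
  fixes \<alpha> \<beta> :: "'a::field"
  assumes "\<alpha> \<noteq> 0"
  shows "Ptau \<alpha> \<beta> \<tau> = \<alpha> ^ (num_ones \<tau> + lam \<tau> 1) * \<beta> ^ length \<tau> * det (Amat \<alpha> \<beta> \<tau>)"
proof (induction "num_ones \<tau>" arbitrary: \<tau>)
  case 0
  then have "det (Amat \<alpha> \<beta> \<tau>) = 1" and "lam \<tau> 1 = 0"
    by (simp_all add: Amat_def lam_eq_0 det_zero)
  then show ?case using Ptau_no_ones[OF assms] 0 by (simp add: 0[symmetric])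
next
  case (Suc K)
  then obtain u m where \<tau>: "\<tau> = u @ True # replicate m False"
    using word_decomp_last_one[of \<tau>] by auto
  have K: "num_ones u = K" using Suc.hyps(2) \<tau> by simp
  show ?case
  proof (cases "K = 0")
    case True
    then show ?thesis
      using Ptau_formula_single_one[OF assms, where u=u and m=m] K \<tau> by (simp add: lam_append_one_replicate_False)
  next
    case False
    then have "1 \<le> num_ones u" using K by simp
    then have "Ptau \<alpha> \<beta> (u @ True # replicate m False)
       = \<alpha> ^ (Suc (num_ones u) + lam (u @ True # replicate m False) 1) * \<beta> ^ (length u + 1 + m)
         * det (Amat \<alpha> \<beta> (u @ True # replicate m False))"
      by (rule Ptau_formula_step) (use Suc.hyps(1) K in simp)
    then show ?thesis using K \<tau> by simp
  qed
qed

theorem theorem1: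
  fixes \<alpha> \<beta> :: "'a::field_char_0" and \<tau> :: "bool list" and n k :: nat
  assumes "\<alpha> \<noteq> 0" and "\<beta> \<noteq> 0"
    and "n \<ge> 1" and "1 \<le> k" and "k \<le> n"
    and "length \<tau> = n" and "num_ones \<tau> = k"
  shows "Ptau \<alpha> \<beta> \<tau> = \<alpha> ^ (k + lam \<tau> 1) * \<beta> ^ n * det (Amat \<alpha> \<beta> \<tau>)"
  using Ptau_eq_det_Amat[OF assms(1)] assms(6,7) by simp

end
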